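(* Let $S$ be a semigroup. Every strongly irreducible semiprime interior ideal of $S$ is a strongly prime interior ideal of $S$.
   Context: A subsemigroup $I$ of $S$ (non-empty with $II\subseteq I$) is an interior ideal if $SIS\subseteq I$. For subsets $A,B$, $AB=\{ab:a\in A,b\in B\}$ and $A^2=AA$. An interior ideal $I$ is semiprime if for every interior ideal $A$ of $S$, $A^{2}\subseteq I$ implies $A\subseteq I$. It is strongly irreducible if for all interior ideals $I_1,I_2$ of $S$, $I_1\cap I_2\subseteq I$ implies $I_1\subseteq I$ or $I_2\subseteq I$. It is strongly prime if for all interior ideals $I_1,I_2$ of $S$, $I_1I_2\cap I_2I_1\subseteq I$ implies $I_1\subseteq I$ or $I_2\subseteq I$. *)

theory Defs
  imports Main
begin

text \<open>Semigroup S is modelled as the type 'a of class semigroup_mult (S = UNIV).\<close>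

definition setmult :: "'a::semigroup_mult set \<Rightarrow> 'a set \<Rightarrow> 'a set" (infixl "\<cdot>\<^sub>s" 70) where
  "A \<cdot>\<^sub>s B = {a * b | a b. a \<in> A \<and> b \<in> B}"

definition subsemigroup :: "'a::semigroup_mult set \<Rightarrow> bool" where
  "subsemigroup I \<longleftrightarrow> I \<noteq> {} \<and> I \<cdot>\<^sub>s I \<subseteq> I"

definition interior_ideal :: "'a::semigroup_mult set \<Rightarrow> bool" where
  "interior_ideal I \<longleftrightarrow> subsemigroup I \<and> (UNIV \<cdot>\<^sub>s I) \<cdot>\<^sub>s UNIV \<subseteq> I"

definition semiprime_interior_ideal :: "'a::semigroup_mult set \<Rightarrow> bool" where
  "semiprime_interior_ideal I \<longleftrightarrow> interior_ideal I \<and>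
     (\<forall>A. interior_ideal A \<longrightarrow> A \<cdot>\<^sub>s A \<subseteq> I \<longrightarrow> A \<subseteq> I)"

definition strongly_irreducible_interior_ideal :: "'a::semigroup_mult set \<Rightarrow> bool" where
  "strongly_irreducible_interior_ideal I \<longleftrightarrow> interior_ideal I \<and>
     (\<forall>I1 I2. interior_ideal I1 \<longrightarrow> interior_ideal I2 \<longrightarrow>
        I1 \<inter> I2 \<subseteq> I \<longrightarrow> I1 \<subseteq> I \<or> I2 \<subseteq> I)"

definition strongly_prime_interior_ideal :: "'a::semigroup_mult set \<Rightarrow> bool" where
  "strongly_prime_interior_ideal I \<longleftrightarrow> interior_ideal I \<and>
     (\<forall>I1 I2. interior_ideal I1 \<longrightarrow> interior_ideal I2 \<longrightarrow>
        (I1 \<cdot>\<^sub>s I2) \<inter> (I2 \<cdot>\<^sub>s I1) \<subseteq> I \<longrightarrow> I1 \<subseteq> I \<or> I2 \<subseteq> I)"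

end

theory Submission
  imports Defs
begin

text \<open>The intersection \<open>J = I\<^sub>1 \<inter> I\<^sub>2\<close> of two interior ideals is again an interior
  ideal, and \<open>J J\<close> lies in both \<open>I\<^sub>1 I\<^sub>2\<close> and \<open>I\<^sub>2 I\<^sub>1\<close>. So if \<open>I\<^sub>1 I\<^sub>2 \<inter> I\<^sub>2 I\<^sub>1 \<subseteq> I\<close>,
  semiprimeness gives \<open>J \<subseteq> I\<close>, and strong irreducibility gives \<open>I\<^sub>1 \<subseteq> I\<close> or \<open>I\<^sub>2 \<subseteq> I\<close>.\<close>

lemma interior_ideal_iff:
  "interior_ideal I \<longleftrightarrow>
     I \<noteq> {} \<and> (\<forall>x\<in>I. \<forall>y\<in>I. x * y \<in> I) \<and> (\<forall>s x t. x \<in> I \<longrightarrow> s * x * t \<in> I)"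
  unfolding interior_ideal_def subsemigroup_def setmult_def by blast

lemma setmult_Int_self_subset:
  "(A \<inter> B) \<cdot>\<^sub>s (A \<inter> B) \<subseteq> (A \<cdot>\<^sub>s B) \<inter> (B \<cdot>\<^sub>s A)"
  unfolding setmult_def by blast

lemma interior_ideal_Int:
  assumes "interior_ideal I\<^sub>1" "interior_ideal I\<^sub>2"
  shows "interior_ideal (I\<^sub>1 \<inter> I\<^sub>2)"
proof -
  obtain a b where a: "a \<in> I\<^sub>1" and b: "b \<in> I\<^sub>2"
    using assms by (auto simp: interior_ideal_iff)
  \<comment> \<open>\<open>b a b a b\<close> has both \<open>a\<close> and \<open>b\<close> as an interior factor.\<close>
  have "b * a * (b * a * b) \<in> I\<^sub>1"
    using assms(1) a by (simp add: interior_ideal_iff)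
  moreover have "(b * a) * b * (a * b) \<in> I\<^sub>2"
    using assms(2) b by (simp add: interior_ideal_iff)
  moreover have "b * a * (b * a * b) = (b * a) * b * (a * b)"
    by (simp add: mult.assoc)
  ultimately have "I\<^sub>1 \<inter> I\<^sub>2 \<noteq> {}" by auto
  with assms show ?thesis by (simp add: interior_ideal_iff)
qed

theorem mainTheorem10:
  fixes I :: "'a::semigroup_mult set"
  assumes "strongly_irreducible_interior_ideal I"
    and "semiprime_interior_ideal I"
  shows "strongly_prime_interior_ideal I"
  unfolding strongly_prime_interior_ideal_def
proof (intro conjI allI impI)
  show "interior_ideal I"
    using assms(2) by (simp add: semiprime_interior_ideal_def)
  fix I\<^sub>1 I\<^sub>2 :: "'a set"
  assume ideals: "interior_ideal I\<^sub>1" "interior_ideal I\<^sub>2"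
    and products: "(I\<^sub>1 \<cdot>\<^sub>s I\<^sub>2) \<inter> (I\<^sub>2 \<cdot>\<^sub>s I\<^sub>1) \<subseteq> I"
  have "(I\<^sub>1 \<inter> I\<^sub>2) \<cdot>\<^sub>s (I\<^sub>1 \<inter> I\<^sub>2) \<subseteq> I"
    using setmult_Int_self_subset products by blast
  then have "I\<^sub>1 \<inter> I\<^sub>2 \<subseteq> I"
    using assms(2) interior_ideal_Int[OF ideals] by (simp add: semiprime_interior_ideal_def)
  then show "I\<^sub>1 \<subseteq> I \<or> I\<^sub>2 \<subseteq> I"
    using assms(1) ideals by (simp add: strongly_irreducible_interior_ideal_def)
qed

end
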